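(* For all $z\geq 1$, \[S_3(z)\le \frac{1534}{42875}\cdot\frac{\log^2 z + 45.75\log z + 524.266}{z},\] where $S_3(z) = \sum_{d>z,\ (d,6)=1}\mu^2(d)\frac{\tau(d)}{\psi_3(d)\,d}$.
   Context: $\tau(d)$ is the number of divisors of $d$, $\psi_3(d)=\prod_{p\mid d,\ p>3}(p-3)$, and $\mu$ is the Möbius function. *)

theory Defs
  imports "HOL-Analysis.Analysis" "HOL-Computational_Algebra.Squarefree"
begin

definition tau :: "nat \<Rightarrow> nat" where
  "tau d = card {k. k dvd d}"

definition psi3 :: "nat \<Rightarrow> real" where
  "psi3 d = (\<Prod>p\<in>{p\<in>prime_factors d. p > 3}. real p - 3)"

definition mu :: "nat \<Rightarrow> int" where
  "mu d = (if squarefree d then (-1) ^ card (prime_factors d) else 0)"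

definition S3_term :: "real \<Rightarrow> nat \<Rightarrow> real" where
  "S3_term z d = (if real d > z \<and> coprime d 6
     then real_of_int ((mu d)^2) * real (tau d) / (psi3 d * real d) else 0)"

definition S3 :: "real \<Rightarrow> real" where
  "S3 z = (\<Sum>d. S3_term z d)"

end

theory Submission
  imports Defs
begin

text \<open>For squarefree \<open>d\<close> coprime to 6 the summand is at most the product over \<open>p | d\<close> of
  \<open>2 / (p (p - 3)) = 1/p\<^sup>2 + 1/p\<^sup>2 + excess3 p\<close>. Expanding this product writes the summand as a sum of
  \<open>excess3_weight e / (a b)\<^sup>2\<close> over the factorisations \<open>d = e a b\<close>, so \<open>S\<^sub>3(z)\<close> is at most
  \<open>\<Sum>\<^sub>e excess3_weight e \<cdot> T(z/e)\<close>, where \<open>T(y)\<close> sums \<open>1/(a b)\<^sup>2\<close> over odd \<open>a, b\<close> with \<open>a b > y\<close>.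
  Splitting according to \<open>a \<le> y\<close> or \<open>a > y\<close> gives \<open>T(y) \<le> (3/8 log y + 27/16) / y\<close>, hence
  \<open>T(z/e) \<le> e (3/8 log z + 27/16) / z\<close>; and \<open>\<Sum>\<^sub>e excess3_weight e \<cdot> e\<close> is at most the product of
  \<open>1 + 6 / (p (p - 3))\<close> over odd \<open>p \<ge> 5\<close>, which telescopes to at most 4. Altogether
  \<open>S\<^sub>3(z) \<le> (3/2 log z + 27/4) / z\<close>, which is below the stated bound.\<close>

section \<open>Sums over odd numbers\<close>

lemma real_nat_floor_bounds:
  fixes r :: real
  assumes "0 \<le> r"
  shows "real (nat \<lfloor>r\<rfloor>) \<le> r" "r < real (nat \<lfloor>r\<rfloor>) + 1"
  using assms by linarith+

definition odd_upto :: "nat \<Rightarrow> nat set" where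
  "odd_upto N = {b. b \<le> N \<and> odd b}"

lemma finite_odd_upto [simp]: "finite (odd_upto N)"
  by (simp add: odd_upto_def)

lemma odd_upto_ge_1: "b \<in> odd_upto N \<Longrightarrow> 1 \<le> b"
  by (auto simp: odd_upto_def elim: oddE)

lemma real_odd_eq: "odd b \<Longrightarrow> real b = 2 * real (b div 2) + 1"
proof -
  assume "odd b"
  then have "b = 2 * (b div 2) + 1" by simp
  then show ?thesis by (metis of_nat_1 of_nat_add of_nat_mult of_nat_numeral)
qed

lemma sum_odd_le_sum_halves:
  fixes f :: "nat \<Rightarrow> real"
  assumes "\<And>b. b \<in> S \<Longrightarrow> odd b \<and> b \<le> N \<and> P (b div 2)" and "\<And>b. 0 \<le> f b"
  shows "sum f S \<le> (\<Sum>k\<in>{k. k \<le> N \<and> P k}. f (2*k+1))"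
proof -
  have "S \<subseteq> (\<lambda>k. 2*k+1) ` {k. k \<le> N \<and> P k}"
  proof
    fix b assume "b \<in> S"
    with assms(1) show "b \<in> (\<lambda>k. 2*k+1) ` {k. k \<le> N \<and> P k}"
      by (intro image_eqI[of _ _ "b div 2"]) (auto intro: le_trans[OF div_le_dividend])
  qed
  then have "sum f S \<le> sum f ((\<lambda>k. 2*k+1) ` {k. k \<le> N \<and> P k})"
    using assms(2) by (intro sum_mono2) auto
  also have "\<dots> = (\<Sum>k\<in>{k. k \<le> N \<and> P k}. f (2*k+1))"
    by (subst sum.reindex) (auto simp: inj_on_def)
  finally show ?thesis .
qed

lemma sum_inverse_odd_squares_telescope:
  assumes "1 \<le> m" "m \<le> n"
  shows "(\<Sum>k\<in>{m..<n}. 1 / real (2*k+1)^2) \<le> 1 / (4 * real m) - 1 / (4 * real n)"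
  using assms(2)
proof (induction n rule: dec_induct)
  case base
  then show ?case by simp
next
  case (step n)
  have n: "1 \<le> real n"
    using step.hyps assms(1) by simp
  have "4 * real n * (real n + 1) \<le> real (2*n+1)^2"
    by (simp add: power2_eq_square algebra_simps)
  then have "1 / real (2*n+1)^2 \<le> 1 / (4 * real n * (real n + 1))"
    using n by (intro divide_left_mono) (auto intro!: mult_pos_pos)
  also have "\<dots> = 1 / (4 * real n) - 1 / (4 * real (Suc n))"
    using n by (simp add: field_simps)
  finally show ?case
    using step.IH step.hyps by simp
qed

lemma sum_inverse_odd_squares_le:
  assumes "1 \<le> m"
  shows "(\<Sum>k\<in>{m..K}. 1 / real (2*k+1)^2) \<le> 1 / (4 * real m)"
proof (cases "m \<le> K")
  case True
  then have "(\<Sum>k\<in>{m..K}. 1 / real (2*k+1)^2) \<le> 1 / (4 * real m) - 1 / (4 * real (Suc K))"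
    using sum_inverse_odd_squares_telescope[OF assms, of "Suc K"] by (simp add: atLeastLessThanSuc_atLeastAtMost)
  moreover have "0 \<le> 1 / (4 * real (Suc K))"
    by simp
  ultimately show ?thesis
    by linarith
next
  case False
  then show ?thesis by simp
qed

lemma sum_inverse_odd_le_ln:
  "(\<Sum>k\<in>{0..K}. 1 / real (2*k+1)) \<le> 1 + ln (real (2*K+1)) / 2"
proof (induction K)
  case 0
  then show ?case by simp
next
  case (Suc K)
  have "ln (real (2*K+1) / real (2*K+3)) \<le> real (2*K+1) / real (2*K+3) - 1"
    by (rule ln_le_minus_one) simp
  also have "\<dots> = - 2 / real (2*K+3)"
    by (simp add: field_simps)
  finally have "1 / real (2 * Suc K + 1) \<le> ln (real (2 * Suc K + 1)) / 2 - ln (real (2*K+1)) / 2"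
    by (simp add: ln_div field_simps)
  with Suc.IH show ?case by simp
qed

lemma prod_odd_excess_le:
  assumes "1 \<le> K"
  shows "(\<Prod>j\<in>{2..K}. 1 + 6 / (real (2*j+1) * (real (2*j+1) - 3))) \<le> 4 * real K^2 / (real K + 1)^2"
  using assms
proof (induction K rule: dec_induct)
  case base
  then show ?case by simp
next
  case (step K)
  let ?F = "\<lambda>j. 1 + 6 / (real (2*j+1) * (real (2*j+1) - 3))"
  define k where "k = real K"
  have k: "1 \<le> k" using step.hyps by (simp add: k_def)
  have "real (2 * Suc K + 1) * (real (2 * Suc K + 1) - 3) = (2*k + 3) * (2*k)"
    by (simp add: k_def algebra_simps)
  moreover have "(2*k + 3) * (2*k) \<noteq> 0"
    using k by simp
  ultimately have last_factor: "?F (Suc K) = (4*k^2 + 6*k + 6) / ((2*k + 3) * (2*k))"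
    by (simp add: add_divide_eq_iff power2_eq_square algebra_simps)
  have "4*(k + 1)^2 * ((k + 1)^2 * ((2*k + 3) * (2*k))) - 4*k^2 * (4*k^2 + 6*k + 6) * (k + 2)^2
      = 4*k * (2*k^3 + 4*k^2 + 4*k + 6)"
    by (simp add: power2_eq_square power3_eq_cube algebra_simps)
  moreover have "0 \<le> 4*k * (2*k^3 + 4*k^2 + 4*k + 6)"
    using k by simp
  ultimately have "4*k^2 * (4*k^2 + 6*k + 6) * (k + 2)^2 \<le> 4*(k + 1)^2 * ((k + 1)^2 * ((2*k + 3) * (2*k)))"
    by linarith
  then have "4*k^2 / (k + 1)^2 * ((4*k^2 + 6*k + 6) / ((2*k + 3) * (2*k))) \<le> 4*(k + 1)^2 / (k + 2)^2"
    using k by (simp add: divide_simps)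
  moreover have "prod ?F {2..Suc K} = prod ?F {2..K} * ?F (Suc K)"
    using step.hyps by (simp add: atLeastAtMostSuc_conv mult.commute)
  moreover have "prod ?F {2..K} * ?F (Suc K) \<le> 4*k^2 / (k + 1)^2 * ((4*k^2 + 6*k + 6) / ((2*k + 3) * (2*k)))"
    unfolding last_factor using step.IH k by (intro mult_right_mono) (auto simp: k_def)
  ultimately show ?case
    by (simp add: k_def add.commute)
qed

lemma sum_odd_inverse_squares_tail_le:
  assumes "1 \<le> x"
  shows "(\<Sum>b\<in>odd_upto N. if x < real b then 1 / real b^2 else 0) \<le> 3 / (4 * x)"
proof -
  define m where "m = nat \<lfloor>(x - 1) / 2\<rfloor> + 1"
  have m1: "1 \<le> m"
    by (simp add: m_def)
  have "0 \<le> (x - 1) / 2" "real m = real (nat \<lfloor>(x - 1) / 2\<rfloor>) + 1"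
    using assms by (simp_all add: m_def)
  then have m: "real m - 1 \<le> (x - 1) / 2" "(x - 1) / 2 < real m"
    using real_nat_floor_bounds[of "(x - 1) / 2"] by linarith+
  have tail_index: "m \<le> b div 2" if "odd b" "x < real b" for b
  proof -
    have "x < 2 * real (b div 2) + 1"
      using real_odd_eq[OF \<open>odd b\<close>] that(2) by simp
    then have "real m < real (b div 2) + 1"
      using m by (simp add: field_simps)
    then show ?thesis by linarith
  qed
  have "(\<Sum>b\<in>odd_upto N. if x < real b then 1 / real b^2 else 0)
      = (\<Sum>b\<in>{b\<in>odd_upto N. x < real b}. 1 / real b^2)"
    by (simp add: sum.inter_filter)
  also have "\<dots> \<le> (\<Sum>k\<in>{k. k \<le> N \<and> m \<le> k}. 1 / real (2*k+1)^2)"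
    using tail_index by (intro sum_odd_le_sum_halves) (auto simp: odd_upto_def)
  also have "{k. k \<le> N \<and> m \<le> k} = {m..N}"
    by auto
  also have "(\<Sum>k\<in>{m..N}. 1 / real (2*k+1)^2) \<le> 1 / (4 * real m)"
    by (rule sum_inverse_odd_squares_le[OF m1])
  also have "\<dots> \<le> 3 / (4 * x)"
  proof -
    have "1 \<le> real m"
      using m1 by simp
    then have "x \<le> 3 * real m"
      using m by (simp add: field_simps)
    then show ?thesis
      using assms by (simp add: field_simps)
  qed
  finally show ?thesis .
qed

lemma sum_odd_inverse_squares_le: "(\<Sum>b\<in>odd_upto N. 1 / real b^2) \<le> 5/4"
proof -
  have "(\<Sum>b\<in>odd_upto N. 1 / real b^2) \<le> (\<Sum>k\<in>{k. k \<le> N \<and> True}. 1 / real (2*k+1)^2)"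
    by (rule sum_odd_le_sum_halves) (auto simp: odd_upto_def)
  also have "{k. k \<le> N \<and> True} = {0..N}"
    by auto
  also have "(\<Sum>k\<in>{0..N}. 1 / real (2*k+1)^2) = 1 + (\<Sum>k\<in>{1..N}. 1 / real (2*k+1)^2)"
    by (simp add: sum.atLeast_Suc_atMost)
  also have "\<dots> \<le> 1 + 1 / (4 * real (1::nat))"
    using sum_inverse_odd_squares_le[of 1 N] by simp
  finally show ?thesis by simp
qed

lemma sum_odd_inverse_le_ln:
  assumes "1 \<le> y"
  shows "(\<Sum>a\<in>odd_upto N. if real a \<le> y then 1 / real a else 0) \<le> 1 + ln y / 2"
proof -
  define K where "K = nat \<lfloor>(y - 1) / 2\<rfloor>"
  have "0 \<le> (y - 1) / 2"
    using assms by simp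
  then have K: "real K \<le> (y - 1) / 2" "(y - 1) / 2 < real K + 1"
    unfolding K_def by (rule real_nat_floor_bounds)+
  have head_index: "b div 2 \<le> K" if "odd b" "real b \<le> y" for b
  proof -
    have "2 * real (b div 2) + 1 \<le> y"
      using real_odd_eq[OF \<open>odd b\<close>] that(2) by simp
    then have "real (b div 2) < real K + 1"
      using K by (simp add: field_simps)
    then show ?thesis by linarith
  qed
  have "(\<Sum>a\<in>odd_upto N. if real a \<le> y then 1 / real a else 0)
      = (\<Sum>a\<in>{a\<in>odd_upto N. real a \<le> y}. 1 / real a)"
    by (simp add: sum.inter_filter)
  also have "\<dots> \<le> (\<Sum>k\<in>{k. k \<le> N \<and> k \<le> K}. 1 / real (2*k+1))"
    using head_index by (intro sum_odd_le_sum_halves) (auto simp: odd_upto_def)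
  also have "\<dots> \<le> (\<Sum>k\<in>{0..K}. 1 / real (2*k+1))"
    by (rule sum_mono2) auto
  also have "\<dots> \<le> 1 + ln (real (2*K+1)) / 2"
    by (rule sum_inverse_odd_le_ln)
  also have "\<dots> \<le> 1 + ln y / 2"
    using K by simp
  finally show ?thesis .
qed

section \<open>Tails of the double sum over odd pairs\<close>

definition odd_pair_tail :: "nat \<Rightarrow> real \<Rightarrow> real" where
  "odd_pair_tail N y =
     (\<Sum>a\<in>odd_upto N. \<Sum>b\<in>odd_upto N. if y < real (a*b) then 1 / (real a^2 * real b^2) else 0)"

lemma odd_pair_tail_le_const: "odd_pair_tail N y \<le> 25/16"
proof -
  have "odd_pair_tail N y \<le> (\<Sum>a\<in>odd_upto N. \<Sum>b\<in>odd_upto N. 1 / real a^2 * (1 / real b^2))"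
    unfolding odd_pair_tail_def by (intro sum_mono) auto
  also have "\<dots> = (\<Sum>a\<in>odd_upto N. 1 / real a^2) * (\<Sum>b\<in>odd_upto N. 1 / real b^2)"
    by (simp add: sum_product)
  also have "\<dots> \<le> 5/4 * (5/4)"
    using sum_odd_inverse_squares_le[of N] by (intro mult_mono) (auto intro: sum_nonneg)
  finally show ?thesis by simp
qed

lemma odd_pair_tail_row_le:
  assumes y: "1 \<le> y" and a: "a \<in> odd_upto N"
  shows "(\<Sum>b\<in>odd_upto N. if y < real (a*b) then 1 / (real a^2 * real b^2) else 0)
    \<le> (if real a \<le> y then 3 / (4*y) * (1 / real a) else 5/4 * (1 / real a^2))"
proof (cases "real a \<le> y")
  case True
  have a1: "1 \<le> real a"
    using odd_upto_ge_1[OF a] by simp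
  have "(\<Sum>b\<in>odd_upto N. if y < real (a*b) then 1 / (real a^2 * real b^2) else 0)
      = 1 / real a^2 * (\<Sum>b\<in>odd_upto N. if y / real a < real b then 1 / real b^2 else 0)"
    unfolding sum_distrib_left
  proof (intro sum.cong refl)
    fix b
    have "y < real (a*b) \<longleftrightarrow> y / real a < real b"
      using a1 by (simp add: pos_divide_less_eq mult.commute)
    then show "(if y < real (a*b) then 1 / (real a^2 * real b^2) else 0)
        = 1 / real a^2 * (if y / real a < real b then 1 / real b^2 else 0)"
      by simp
  qed
  also have "\<dots> \<le> 1 / real a^2 * (3 / (4 * (y / real a)))"
    using True a1 by (intro mult_left_mono sum_odd_inverse_squares_tail_le) auto
  also have "\<dots> = 3 / (4*y) * (1 / real a)"
    using a1 y by (simp add: field_simps power2_eq_square)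
  finally show ?thesis
    using True by simp
next
  case False
  have "(\<Sum>b\<in>odd_upto N. if y < real (a*b) then 1 / (real a^2 * real b^2) else 0)
      \<le> (\<Sum>b\<in>odd_upto N. 1 / real a^2 * (1 / real b^2))"
    by (intro sum_mono) auto
  also have "\<dots> \<le> 1 / real a^2 * (5/4)"
    unfolding sum_distrib_left[symmetric] by (intro mult_left_mono sum_odd_inverse_squares_le) auto
  finally show ?thesis
    using False by simp
qed

lemma odd_pair_tail_le:
  assumes y: "1 \<le> y"
  shows "odd_pair_tail N y \<le> (3/8 * ln y + 27/16) / y"
proof -
  have "odd_pair_tail N y
      \<le> (\<Sum>a\<in>odd_upto N. if real a \<le> y then 3 / (4*y) * (1 / real a) else 5/4 * (1 / real a^2))"
    unfolding odd_pair_tail_def by (intro sum_mono odd_pair_tail_row_le[OF y])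
  also have "\<dots> = 3 / (4*y) * (\<Sum>a\<in>odd_upto N. if real a \<le> y then 1 / real a else 0)
      + 5/4 * (\<Sum>a\<in>odd_upto N. if y < real a then 1 / real a^2 else 0)"
    by (auto simp: sum_distrib_left sum.distrib[symmetric] intro!: sum.cong)
  also have "\<dots> \<le> 3 / (4*y) * (1 + ln y / 2) + 5/4 * (3 / (4*y))"
    using sum_odd_inverse_le_ln[OF y] sum_odd_inverse_squares_tail_le[OF y] y
    by (intro add_mono mult_left_mono) auto
  also have "\<dots> = (3/8 * ln y + 27/16) / y"
    using y by (simp add: field_simps)
  finally show ?thesis .
qed

lemma odd_pair_tail_scaled_le:
  assumes z: "1 \<le> z" and e: "1 \<le> e"
  shows "odd_pair_tail N (z / e) \<le> e * ((3/8 * ln z + 27/16) / z)"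
proof (cases "1 \<le> z / e")
  case True
  have "odd_pair_tail N (z / e) \<le> (3/8 * ln (z / e) + 27/16) / (z / e)"
    by (rule odd_pair_tail_le[OF True])
  also have "\<dots> \<le> (3/8 * ln z + 27/16) / (z / e)"
    using z e True by (intro divide_right_mono) (auto simp: ln_div)
  also have "\<dots> = e * ((3/8 * ln z + 27/16) / z)"
    using z e by (simp add: field_simps)
  finally show ?thesis .
next
  case False
  then have "z < e"
    using e by (simp add: divide_less_eq)
  then have "1 \<le> e / z"
    using z by (simp add: le_divide_eq)
  have "odd_pair_tail N (z / e) \<le> 25/16"
    by (rule odd_pair_tail_le_const)
  also have "\<dots> \<le> 27/16 * (e / z)"
    using \<open>1 \<le> e / z\<close> by linarith
  also have "\<dots> \<le> (3/8 * ln z + 27/16) * (e / z)"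
    using z e by (intro mult_right_mono) auto
  also have "\<dots> = e * ((3/8 * ln z + 27/16) / z)"
    by simp
  finally show ?thesis .
qed

section \<open>Squarefree numbers coprime to 6\<close>

lemma prime_factor_coprime_6:
  assumes "coprime d (6::nat)" "p \<in> prime_factors d"
  shows "3 < p \<and> odd p"
proof -
  have p: "prime p" "p dvd d"
    using assms(2) by auto
  have "coprime p 6"
    using coprime_divisors[OF \<open>p dvd d\<close> dvd_refl assms(1)] .
  then have "coprime p 2" "coprime p 3"
    using coprime_mult_right_iff[of p 2 3] by simp_all
  moreover have "2 \<le> p"
    using p(1) prime_ge_2_nat by blast
  ultimately show ?thesis
    by (cases "p = 2 \<or> p = 3") auto
qed

lemma divisor_of_squarefree_coprime_6:
  assumes "c dvd (d::nat)" "squarefree d" "coprime d 6" "d \<le> N"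
  shows "c \<le> N" "squarefree c" "coprime c 6" "odd c"
proof -
  have "d \<noteq> 0"
    using assms(2) by (cases "d = 0") auto
  then have "c \<le> d"
    using assms(1) by (simp add: dvd_imp_le)
  then show "c \<le> N"
    using assms(4) by simp
  show "squarefree c"
    using assms(1,2) by (rule squarefree_mono)
  show "coprime c 6"
    using coprime_divisors[OF assms(1) dvd_refl assms(3)] .
  then show "odd c"
    using coprime_mult_right_iff[of c 2 3] by simp
qed

lemma squarefree_eq_prod_prime_factors:
  assumes "squarefree (d::nat)"
  shows "d = \<Prod>(prime_factors d)"
proof -
  have "d \<noteq> 0"
    using assms by (cases "d = 0") auto
  then have "d = (\<Prod>p\<in>prime_factors d. p ^ multiplicity p d)"
    using prime_factorization_nat by blast
  also have "\<dots> = \<Prod>(prime_factors d)"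
    using squarefree_factorial_semiring'[OF \<open>d \<noteq> 0\<close>] assms by (intro prod.cong) auto
  finally show ?thesis .
qed

lemma prime_factors_prod_primes:
  assumes "finite A" "\<And>p. p \<in> A \<Longrightarrow> prime (p::nat)"
  shows "prime_factors (\<Prod>A) = A"
proof -
  have "0 \<notin> (\<lambda>p. p) ` A"
    using assms(2) by force
  then have "prime_factors (\<Prod>A) = \<Union>((prime_factors \<circ> (\<lambda>p. p)) ` A)"
    using prime_factors_prod[OF assms(1)] by blast
  also have "\<dots> = A"
    using assms(2) by (auto simp: prime_prime_factors)
  finally show ?thesis .
qed

lemma tau_squarefree_le:
  assumes "squarefree (d::nat)"
  shows "tau d \<le> 2 ^ card (prime_factors d)"
proof -
  have "inj_on prime_factors {k. k dvd d}"
  proof (rule inj_onI)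
    fix k l
    assume "k \<in> {k. k dvd d}" "l \<in> {k. k dvd d}" "prime_factors k = prime_factors l"
    then show "k = l"
      using squarefree_eq_prod_prime_factors squarefree_mono assms by (metis mem_Collect_eq)
  qed
  moreover have "prime_factors ` {k. k dvd d} \<subseteq> Pow (prime_factors d)"
    using assms dvd_prime_factors by (cases "d = 0") auto
  ultimately have "card {k. k dvd d} \<le> card (Pow (prime_factors d))"
    by (intro card_inj_on_le) auto
  then show ?thesis
    by (simp add: tau_def card_Pow)
qed

section \<open>Expanding a summand over the factorisations d = e a b\<close>

definition excess3 :: "nat \<Rightarrow> real" where
  "excess3 p = (if 3 < p then 6 / (real p^2 * (real p - 3)) else 0)"

definition excess3_weight :: "nat \<Rightarrow> real" where
  "excess3_weight e = (\<Prod>p\<in>prime_factors e. excess3 p)"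

lemma mult_excess3:
  assumes "3 < p"
  shows "real p * excess3 p = 6 / (real p * (real p - 3))"
proof -
  have "real p - 3 \<noteq> 0" "real p \<noteq> 0"
    using assms by simp_all
  then show ?thesis
    using assms by (simp add: excess3_def field_simps power2_eq_square)
qed

lemma excess3_nonneg: "0 \<le> excess3 p"
  by (simp add: excess3_def)

lemma excess3_weight_nonneg: "0 \<le> excess3_weight e"
  by (simp add: excess3_weight_def excess3_nonneg prod_nonneg)

lemma S3_term_nonneg: "0 \<le> S3_term z d"
proof -
  have "0 \<le> psi3 d"
    unfolding psi3_def by (intro prod_nonneg) auto
  then show ?thesis
    by (auto simp: S3_term_def intro!: divide_nonneg_nonneg)
qed

lemma excess3_split:
  assumes "3 < p"
  shows "2 / ((real p - 3) * real p) = excess3 p + 1 / real p^2 + 1 / real p^2"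
proof -
  have "real p - 3 \<noteq> 0" "real p \<noteq> 0"
    using assms by simp_all
  then show ?thesis
    using assms by (simp add: excess3_def field_simps power2_eq_square)
qed

lemma S3_term_le_prod_excess3:
  assumes sq: "squarefree d" and cop: "coprime d 6" and dz: "z < real d"
  shows "S3_term z d \<le> (\<Prod>p\<in>prime_factors d. excess3 p + 1 / real p^2 + 1 / real p^2)"
proof -
  let ?P = "prime_factors d"
  have big: "3 < real p" if "p \<in> ?P" for p
    using prime_factor_coprime_6[OF cop that] by simp
  have mu: "real_of_int ((mu d)^2) = 1"
    using sq by (simp add: mu_def flip: power_mult)
  have "{p \<in> ?P. 3 < p} = ?P"
    using big by auto
  then have psi: "psi3 d = (\<Prod>p\<in>?P. real p - 3)"
    by (simp add: psi3_def)
  have d: "real d = (\<Prod>p\<in>?P. real p)"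
    by (subst squarefree_eq_prod_prime_factors[OF sq]) simp
  have "real (tau d) \<le> real (2 ^ card ?P)"
    using tau_squarefree_le[OF sq] by (rule of_nat_mono)
  then have tau: "real (tau d) \<le> 2 ^ card ?P"
    by simp
  have "S3_term z d = real (tau d) / (psi3 d * real d)"
    using dz cop mu by (simp add: S3_term_def)
  also have "\<dots> \<le> 2 ^ card ?P / (psi3 d * real d)"
    using tau big unfolding psi d by (intro divide_right_mono mult_nonneg_nonneg prod_nonneg) (auto dest: big)
  also have "\<dots> = (\<Prod>p\<in>?P. 2 / ((real p - 3) * real p))"
    by (simp add: psi d prod_dividef prod.distrib)
  also have "\<dots> = (\<Prod>p\<in>?P. excess3 p + 1 / real p^2 + 1 / real p^2)"
    using prime_factor_coprime_6[OF cop] by (intro prod.cong refl excess3_split) auto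
  finally show ?thesis .
qed

lemma prod_add3:
  fixes f g h :: "'a \<Rightarrow> 'b::comm_semiring_1"
  assumes "finite A"
  shows "(\<Prod>x\<in>A. f x + g x + h x) =
    (\<Sum>(E, B)\<in>Sigma (Pow A) (\<lambda>E. Pow (A - E)). prod f E * (prod g B * prod h (A - E - B)))"
proof -
  have "(\<Prod>x\<in>A. f x + g x + h x) = (\<Sum>E\<in>Pow A. prod f E * (\<Prod>x\<in>A - E. g x + h x))"
    using prod_add[OF assms, of f "\<lambda>x. g x + h x"] by (simp add: add.assoc)
  also have "\<dots> = (\<Sum>E\<in>Pow A. prod f E * (\<Sum>B\<in>Pow (A - E). prod g B * prod h (A - E - B)))"
    using assms by (intro sum.cong refl) (simp add: prod_add)
  also have "\<dots> = (\<Sum>(E, B)\<in>Sigma (Pow A) (\<lambda>E. Pow (A - E)). prod f E * (prod g B * prod h (A - E - B)))"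
    using assms by (subst sum.Sigma[symmetric]) (auto simp: sum_distrib_left)
  finally show ?thesis .
qed

lemma prod_partition3:
  fixes f :: "'a \<Rightarrow> 'b::comm_monoid_mult"
  assumes "finite A" "E \<subseteq> A" "B \<subseteq> A - E"
  shows "prod f E * prod f B * prod f (A - E - B) = prod f A"
  using prod.subset_diff[OF assms(2,1), of f] prod.subset_diff[OF assms(3), of f] assms(1)
  by (simp add: ac_simps)

definition sqf_coprime6_upto :: "nat \<Rightarrow> nat set" where
  "sqf_coprime6_upto N = {e. e \<le> N \<and> squarefree e \<and> coprime e 6}"

definition triple_range :: "nat \<Rightarrow> (nat \<times> nat \<times> nat) set" where
  "triple_range N = sqf_coprime6_upto N \<times> odd_upto N \<times> odd_upto N"

fun mult3 :: "nat \<times> nat \<times> nat \<Rightarrow> nat" where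
  "mult3 (e, a, b) = e * a * b"

fun triple_term :: "real \<Rightarrow> nat \<times> nat \<times> nat \<Rightarrow> real" where
  "triple_term z (e, a, b) =
     (if z < real (e * a * b) then excess3_weight e / (real a^2 * real b^2) else 0)"

definition partition_factors :: "nat set \<Rightarrow> nat set \<times> nat set \<Rightarrow> nat \<times> nat \<times> nat" where
  "partition_factors P = (\<lambda>(E, B). (\<Prod>E, \<Prod>B, \<Prod>(P - E - B)))"

lemma finite_sqf_coprime6_upto [simp]: "finite (sqf_coprime6_upto N)"
  by (simp add: sqf_coprime6_upto_def)

lemma finite_triple_range [simp]: "finite (triple_range N)"
  by (simp add: triple_range_def)

lemma sqf_coprime6_upto_ge_1: "e \<in> sqf_coprime6_upto N \<Longrightarrow> 1 \<le> e"
  by (cases e) (auto simp: sqf_coprime6_upto_def)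

lemma triple_term_nonneg: "0 \<le> triple_term z t"
  by (cases t) (simp add: excess3_weight_nonneg)

lemma inj_on_partition_factors:
  assumes "finite P" "\<And>p. p \<in> P \<Longrightarrow> prime p"
  shows "inj_on (partition_factors P) (Sigma (Pow P) (\<lambda>E. Pow (P - E)))"
proof (rule inj_onI, clarify)
  fix E B E' B'
  assume sub: "E \<subseteq> P" "B \<subseteq> P - E" "E' \<subseteq> P" "B' \<subseteq> P - E'"
    and eq: "partition_factors P (E, B) = partition_factors P (E', B')"
  have factors: "prime_factors (\<Prod>C) = C" if "C \<subseteq> P" for C
    using that assms by (intro prime_factors_prod_primes) (auto intro: finite_subset)
  from eq have "\<Prod>E = \<Prod>E'" "\<Prod>B = \<Prod>B'"
    by (simp_all add: partition_factors_def)
  then show "E = E' \<and> B = B'"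
    using factors sub by (metis Diff_subset subset_trans)
qed

lemma partition_factors_in_fibre:
  assumes "squarefree d" "coprime d 6" "d \<le> N"
    and "E \<subseteq> prime_factors d" "B \<subseteq> prime_factors d - E"
  shows "partition_factors (prime_factors d) (E, B) \<in> {t \<in> triple_range N. mult3 t = d}"
proof -
  let ?P = "prime_factors d"
  have divisor: "\<Prod>C dvd d" if "C \<subseteq> ?P" for C
    using prod_dvd_prod_subset[OF finite_set_mset that, of "\<lambda>p. p"]
    by (simp flip: squarefree_eq_prod_prime_factors[OF assms(1)])
  have range: "\<Prod>C \<le> N \<and> squarefree (\<Prod>C) \<and> coprime (\<Prod>C) 6 \<and> odd (\<Prod>C)" if "C \<subseteq> ?P" for C
    using divisor_of_squarefree_coprime_6[OF divisor[OF that] assms(1-3)] by simp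
  have "?P - E - B \<subseteq> ?P"
    by blast
  then have "partition_factors ?P (E, B) \<in> triple_range N"
    using range[of E] range[of B] range[of "?P - E - B"] assms(4,5)
    by (auto simp: partition_factors_def triple_range_def sqf_coprime6_upto_def odd_upto_def)
  moreover have "mult3 (partition_factors ?P (E, B)) = d"
    using prod_partition3[OF finite_set_mset assms(4,5), of "\<lambda>p. p"]
    by (simp add: partition_factors_def flip: squarefree_eq_prod_prime_factors[OF assms(1)])
  ultimately show ?thesis
    by simp
qed

lemma triple_term_partition_factors:
  assumes "squarefree d" "z < real d" "E \<subseteq> prime_factors d" "B \<subseteq> prime_factors d - E"
  shows "triple_term z (partition_factors (prime_factors d) (E, B)) =
    prod excess3 E * ((\<Prod>p\<in>B. 1 / real p^2) * (\<Prod>p\<in>prime_factors d - E - B. 1 / real p^2))"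
proof -
  let ?P = "prime_factors d"
  have fin: "finite C" if "C \<subseteq> ?P" for C
    using that by (rule finite_subset) simp
  have "prime_factors (\<Prod>E) = E"
    using assms(3) by (intro prime_factors_prod_primes fin) auto
  then have weight: "excess3_weight (\<Prod>E) = prod excess3 E"
    by (simp add: excess3_weight_def)
  have inverse_square: "1 / real (\<Prod>C)^2 = (\<Prod>p\<in>C. 1 / real p^2)" if "C \<subseteq> ?P" for C
    using fin[OF that] by (simp add: prod_dividef prod_power_distrib)
  have "?P - E - B \<subseteq> ?P" "B \<subseteq> ?P"
    using assms(4) by auto
  note inverse_squares = this[THEN inverse_square]
  have "\<Prod>E * \<Prod>B * \<Prod>(?P - E - B) = d"
    using prod_partition3[OF finite_set_mset assms(3,4), of "\<lambda>p. p"]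
    by (simp flip: squarefree_eq_prod_prime_factors[OF assms(1)])
  then have "triple_term z (partition_factors ?P (E, B))
      = excess3_weight (\<Prod>E) * (1 / real (\<Prod>B)^2 * (1 / real (\<Prod>(?P - E - B))^2))"
    using assms(2) by (simp add: partition_factors_def)
  then show ?thesis
    by (simp only: weight inverse_squares)
qed

lemma S3_term_le_sum_fibre:
  assumes "d \<le> N"
  shows "S3_term z d \<le> (\<Sum>t\<in>{t \<in> triple_range N. mult3 t = d}. triple_term z t)"
proof (cases "squarefree d \<and> coprime d 6 \<and> z < real d")
  case False
  then have "S3_term z d = 0"
    by (auto simp: S3_term_def mu_def)
  then show ?thesis
    by (simp add: sum_nonneg triple_term_nonneg)
next
  case True
  then have sq: "squarefree d" and cop: "coprime d 6" and dz: "z < real d"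
    by auto
  define P where "P = prime_factors d"
  let ?I = "Sigma (Pow P) (\<lambda>E. Pow (P - E))"
  have "S3_term z d \<le> (\<Prod>p\<in>P. excess3 p + 1 / real p^2 + 1 / real p^2)"
    unfolding P_def by (rule S3_term_le_prod_excess3[OF sq cop dz])
  also have "\<dots> = (\<Sum>(E, B)\<in>?I. prod excess3 E * ((\<Prod>p\<in>B. 1 / real p^2) * (\<Prod>p\<in>P - E - B. 1 / real p^2)))"
    by (rule prod_add3) (simp add: P_def)
  also have "\<dots> = (\<Sum>x\<in>?I. triple_term z (partition_factors P x))"
    using triple_term_partition_factors[OF sq dz] by (intro sum.cong refl) (auto simp: P_def)
  also have "\<dots> = (\<Sum>t\<in>partition_factors P ` ?I. triple_term z t)"
    by (rule sum.reindex[symmetric, unfolded comp_def], rule inj_on_partition_factors) (auto simp: P_def)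
  also have "\<dots> \<le> (\<Sum>t\<in>{t \<in> triple_range N. mult3 t = d}. triple_term z t)"
    using partition_factors_in_fibre[OF sq cop assms] triple_term_nonneg
    by (intro sum_mono2) (auto simp: P_def)
  finally show ?thesis .
qed

lemma sum_S3_term_le_sum_triple_term:
  "(\<Sum>d<N. S3_term z d) \<le> (\<Sum>t\<in>triple_range N. triple_term z t)"
proof -
  let ?S = "{t \<in> triple_range N. mult3 t < N}"
  have "(\<Sum>d<N. S3_term z d) \<le> (\<Sum>d<N. \<Sum>t\<in>{t \<in> triple_range N. mult3 t = d}. triple_term z t)"
    by (intro sum_mono S3_term_le_sum_fibre) simp
  also have "\<dots> = (\<Sum>d<N. \<Sum>t\<in>{t \<in> ?S. mult3 t = d}. triple_term z t)"
    by (intro sum.cong refl) auto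
  also have "\<dots> = (\<Sum>t\<in>?S. triple_term z t)"
    by (rule sum.group) auto
  also have "\<dots> \<le> (\<Sum>t\<in>triple_range N. triple_term z t)"
    by (intro sum_mono2) (auto simp: triple_term_nonneg)
  finally show ?thesis .
qed

lemma sum_triple_term_eq:
  "(\<Sum>t\<in>triple_range N. triple_term z t)
    = (\<Sum>e\<in>sqf_coprime6_upto N. excess3_weight e * odd_pair_tail N (z / real e))"
  unfolding triple_range_def odd_pair_tail_def sum.cartesian_product' sum_distrib_left
proof (intro sum.cong refl)
  fix e a b
  assume "e \<in> sqf_coprime6_upto N"
  then have "0 < real e"
    using sqf_coprime6_upto_ge_1 by fastforce
  then have "z < real (e * a * b) \<longleftrightarrow> z / real e < real (a * b)"
    by (simp add: pos_divide_less_eq mult_ac)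
  then show "triple_term z (e, a, b)
      = excess3_weight e * (if z / real e < real (a * b) then 1 / (real a^2 * real b^2) else 0)"
    by simp
qed

section \<open>The weighted sum over the factor e\<close>

lemma prod_odd_excess3_le_4: "(\<Prod>p\<in>{p. p \<le> N \<and> odd p \<and> 3 < p}. 1 + real p * excess3 p) \<le> 4"
proof -
  let ?Q = "{p. p \<le> N \<and> odd p \<and> 3 < p}"
  let ?X = "\<lambda>p. 1 + real p * excess3 p"
  have X_ge_1: "1 \<le> ?X p" for p
    by (simp add: excess3_nonneg)
  have "?Q \<subseteq> (\<lambda>k. 2*k+1) ` {2..N}"
  proof
    fix p assume "p \<in> ?Q"
    then show "p \<in> (\<lambda>k. 2*k+1) ` {2..N}"
      by (intro image_eqI[of _ _ "p div 2"]) auto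
  qed
  then have "prod ?X ?Q \<le> prod ?X ((\<lambda>k. 2*k+1) ` {2..N})"
    using X_ge_1 by (intro prod_mono2) (auto intro: order_trans[OF zero_le_one])
  also have "\<dots> = (\<Prod>k\<in>{2..N}. ?X (2*k+1))"
    by (subst prod.reindex) (auto simp: inj_on_def)
  also have "\<dots> = (\<Prod>k\<in>{2..N}. 1 + 6 / (real (2*k+1) * (real (2*k+1) - 3)))"
  proof (intro prod.cong refl)
    fix k assume "k \<in> {2..N}"
    then have "3 < 2*k+1"
      by simp
    then show "?X (2*k+1) = 1 + 6 / (real (2*k+1) * (real (2*k+1) - 3))"
      by (simp only: mult_excess3)
  qed
  also have "\<dots> \<le> 4"
  proof (cases "1 \<le> N")
    case True
    have "real N^2 \<le> (real N + 1)^2"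
      by (intro power_mono) auto
    then have "4 * real N^2 / (real N + 1)^2 \<le> 4"
      by (simp add: divide_le_eq)
    then show ?thesis
      by (rule order_trans[OF prod_odd_excess_le[OF True]])
  next
    case False
    then show ?thesis by simp
  qed
  finally show ?thesis .
qed

lemma sum_excess3_weight_le_4: "(\<Sum>e\<in>sqf_coprime6_upto N. excess3_weight e * real e) \<le> 4"
proof -
  let ?Q = "{p. p \<le> N \<and> odd p \<and> 3 < p}"
  let ?X = "\<lambda>p. real p * excess3 p"
  have "finite ?Q"
    by (rule finite_subset[of _ "{..N}"]) auto
  have "inj_on prime_factors (sqf_coprime6_upto N)"
  proof (rule inj_onI)
    fix k l
    assume "k \<in> sqf_coprime6_upto N" "l \<in> sqf_coprime6_upto N" "prime_factors k = prime_factors l"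
    then show "k = l"
      using squarefree_eq_prod_prime_factors[of k] squarefree_eq_prod_prime_factors[of l]
      by (simp add: sqf_coprime6_upto_def)
  qed
  have "(\<Sum>e\<in>sqf_coprime6_upto N. excess3_weight e * real e)
      = (\<Sum>e\<in>sqf_coprime6_upto N. prod ?X (prime_factors e))"
  proof (intro sum.cong refl)
    fix e assume "e \<in> sqf_coprime6_upto N"
    then have "real e = (\<Prod>p\<in>prime_factors e. real p)"
      by (subst squarefree_eq_prod_prime_factors) (auto simp: sqf_coprime6_upto_def)
    then show "excess3_weight e * real e = prod ?X (prime_factors e)"
      by (simp add: excess3_weight_def prod.distrib)
  qed
  also have "\<dots> = (\<Sum>E\<in>prime_factors ` sqf_coprime6_upto N. prod ?X E)"
    using sum.reindex[OF \<open>inj_on prime_factors _\<close>, of "prod ?X"] by simp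
  also have "\<dots> \<le> (\<Sum>E\<in>Pow ?Q. prod ?X E)"
  proof (intro sum_mono2)
    show "finite (Pow ?Q)"
      using \<open>finite ?Q\<close> by simp
    show "prime_factors ` sqf_coprime6_upto N \<subseteq> Pow ?Q"
    proof (intro image_subsetI PowI subsetI)
      fix e p
      assume e: "e \<in> sqf_coprime6_upto N" and p: "p \<in> prime_factors e"
      then have "p dvd e"
        by auto
      then have "p \<le> e"
        using sqf_coprime6_upto_ge_1[OF e] by (simp add: dvd_imp_le)
      then show "p \<in> ?Q"
        using e prime_factor_coprime_6[OF _ p] by (auto simp: sqf_coprime6_upto_def)
    qed
  qed (auto intro!: prod_nonneg simp: excess3_nonneg)
  also have "\<dots> = (\<Prod>p\<in>?Q. ?X p + 1)"
    using prod_add[OF \<open>finite ?Q\<close>, of ?X "\<lambda>_. 1"] by simp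
  also have "\<dots> \<le> 4"
    using prod_odd_excess3_le_4[of N] by (simp add: add.commute)
  finally show ?thesis .
qed

lemma partial_sum_S3_term_le:
  assumes "1 \<le> z"
  shows "(\<Sum>d<n. S3_term z d) \<le> (3/2 * ln z + 27/4) / z"
proof -
  define B where "B = (3/8 * ln z + 27/16) / z"
  have "0 \<le> B"
    using assms by (simp add: B_def)
  have "(\<Sum>d<n. S3_term z d) \<le> (\<Sum>e\<in>sqf_coprime6_upto n. excess3_weight e * odd_pair_tail n (z / real e))"
    using sum_S3_term_le_sum_triple_term sum_triple_term_eq by metis
  also have "\<dots> \<le> (\<Sum>e\<in>sqf_coprime6_upto n. excess3_weight e * real e) * B"
    unfolding sum_distrib_right mult.assoc B_def
    using assms by (intro sum_mono mult_left_mono odd_pair_tail_scaled_le excess3_weight_nonneg)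
      (auto dest: sqf_coprime6_upto_ge_1)
  also have "\<dots> \<le> 4 * B"
    using sum_excess3_weight_le_4 \<open>0 \<le> B\<close> by (rule mult_right_mono)
  also have "\<dots> = (3/2 * ln z + 27/4) / z"
    by (simp add: B_def)
  finally show ?thesis .
qed

theorem mainTheorem9:
  fixes z :: real
  assumes "z \<ge> 1"
  shows "summable (S3_term z) \<and>
    S3 z \<le> (1534 / 42875) * ((ln z)^2 + 45.75 * ln z + 524.266) / z"
proof -
  note partial_sums = partial_sum_S3_term_le[OF assms]
  have summable: "summable (S3_term z)"
    by (rule summableI_nonneg_bounded[OF S3_term_nonneg partial_sums])
  have "S3 z \<le> (3/2 * ln z + 27/4) / z"
    unfolding S3_def by (rule suminf_le_const[OF summable partial_sums])
  also have "\<dots> \<le> (1534 / 42875) * ((ln z)^2 + 45.75 * ln z + 524.266) / z"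
  proof -
    have "0 \<le> ln z"
      using assms by simp
    then have "3/2 * ln z + 27/4 \<le> (1534 / 42875) * ((ln z)^2 + 45.75 * ln z + 524.266)"
      by (simp add: algebra_simps) (use zero_le_power2[of "ln z"] in linarith)
    then show ?thesis
      using assms by (intro divide_right_mono) auto
  qed
  finally show ?thesis
    using summable by simp
qed

end
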